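(* Every pAND net is sub-sound.
   Context: Petri nets and markings. A Petri net is a triple $(P,T,F)$ with $P$ a finite set of places, $T$ a finite set of transitions, $P\cap T=\emptyset$, and $F\subseteq (P\times T)\cup(T\times P)$. For a node $x$, $\bullet x=\{y\mid (y,x)\in F\}$, $x\bullet=\{y\mid (x,y)\in F\}$. A marking is a multiset over $P$ (a function $P\to\mathbb N$); sets of places are identified with bags of multiplicity one, $+,-,\le$ are pointwise, and $k.m$ is the sum of $k$ copies of $m$. Transition $t$ is enabled at $m$ iff $\bullet t\le m$, firing gives $m-\bullet t+t\bullet$, and $m\xrightarrow{*}m'$ denotes reachability by a finite (possibly empty) firing sequence. A pWF net is $(P,T,F,I,O)$ with $(P,T,F)$ a Petri net, $I,O\subseteq P$ non-empty (input/output places), every node reachable by a directed path from some node of $I$, and some node of $O$ reachable from every node. AND nets. An AND net is an acyclic WF net $(P,T,F,I,O)$ such that for every place $p$: (1) either $p\in I$ and $|\bullet p|=0$, or $p\notin I$ and $|\bullet p|=1$; and (2) either $p\in O$ and $|p\bullet|=0$, or $p\notin O$ and $|p\bullet|=1$. A pAND net is an AND net that is a pWF net. Sub-soundness. A pWF net is sub-sound if for all integers $k\ge k'\ge 0$ and every marking $m'$: if $k.I\xrightarrow{*}m'+k'.O$ then $m'\xrightarrow{*}(k-k').O$. *)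

theory Defs
  imports Main "HOL-Library.Multiset"
begin

text \<open>Nodes of a Petri net: places (Inl) and transitions (Inr); disjointness of
P and T is built into the sum type. The flow relation F is a relation on nodes.\<close>

type_synonym ('p,'t) node = "'p + 't"

definition petri_net :: "'p set \<Rightarrow> 't set \<Rightarrow> (('p,'t) node \<times> ('p,'t) node) set \<Rightarrow> bool" where
  "petri_net P T F \<longleftrightarrow> finite P \<and> finite T \<and>
     F \<subseteq> (Inl ` P \<times> Inr ` T) \<union> (Inr ` T \<times> Inl ` P)"

definition nodes :: "'p set \<Rightarrow> 't set \<Rightarrow> ('p,'t) node set" where
  "nodes P T = Inl ` P \<union> Inr ` T"

definition preset :: "(('p,'t) node \<times> ('p,'t) node) set \<Rightarrow> ('p,'t) node \<Rightarrow> ('p,'t) node set" where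
  "preset F x = {y. (y, x) \<in> F}"

definition postset :: "(('p,'t) node \<times> ('p,'t) node) set \<Rightarrow> ('p,'t) node \<Rightarrow> ('p,'t) node set" where
  "postset F x = {y. (x, y) \<in> F}"

definition pre_t :: "(('p,'t) node \<times> ('p,'t) node) set \<Rightarrow> 't \<Rightarrow> 'p multiset" where
  "pre_t F t = mset_set {p. (Inl p, Inr t) \<in> F}"

definition post_t :: "(('p,'t) node \<times> ('p,'t) node) set \<Rightarrow> 't \<Rightarrow> 'p multiset" where
  "post_t F t = mset_set {p. (Inr t, Inl p) \<in> F}"

definition fire_step :: "'t set \<Rightarrow> (('p,'t) node \<times> ('p,'t) node) set \<Rightarrow> 'p multiset \<Rightarrow> 'p multiset \<Rightarrow> bool" where
  "fire_step T F m m' \<longleftrightarrow> (\<exists>t\<in>T. pre_t F t \<subseteq># m \<and> m' = m - pre_t F t + post_t F t)"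

definition reach :: "'t set \<Rightarrow> (('p,'t) node \<times> ('p,'t) node) set \<Rightarrow> 'p multiset \<Rightarrow> 'p multiset \<Rightarrow> bool" where
  "reach T F = (fire_step T F)\<^sup>*\<^sup>*"

definition pWF_net :: "'p set \<Rightarrow> 't set \<Rightarrow> (('p,'t) node \<times> ('p,'t) node) set \<Rightarrow> 'p set \<Rightarrow> 'p set \<Rightarrow> bool" where
  "pWF_net P T F Inp Out \<longleftrightarrow> petri_net P T F \<and> Inp \<subseteq> P \<and> Out \<subseteq> P \<and> Inp \<noteq> {} \<and> Out \<noteq> {} \<and>
     (\<forall>x\<in>nodes P T. \<exists>i\<in>Inp. (Inl i, x) \<in> F\<^sup>*) \<and>
     (\<forall>x\<in>nodes P T. \<exists>q\<in>Out. (x, Inl q) \<in> F\<^sup>*)"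

definition AND_conditions :: "'p set \<Rightarrow> 't set \<Rightarrow> (('p,'t) node \<times> ('p,'t) node) set \<Rightarrow> 'p set \<Rightarrow> 'p set \<Rightarrow> bool" where
  "AND_conditions P T F Inp Out \<longleftrightarrow> acyclic F \<and>
     (\<forall>p\<in>P. ((p \<in> Inp \<and> card (preset F (Inl p)) = 0) \<or> (p \<notin> Inp \<and> card (preset F (Inl p)) = 1)) \<and>
             ((p \<in> Out \<and> card (postset F (Inl p)) = 0) \<or> (p \<notin> Out \<and> card (postset F (Inl p)) = 1)))"

definition pAND_net :: "'p set \<Rightarrow> 't set \<Rightarrow> (('p,'t) node \<times> ('p,'t) node) set \<Rightarrow> 'p set \<Rightarrow> 'p set \<Rightarrow> bool" where
  "pAND_net P T F Inp Out \<longleftrightarrow> pWF_net P T F Inp Out \<and> AND_conditions P T F Inp Out"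

definition sub_sound :: "'p set \<Rightarrow> 't set \<Rightarrow> (('p,'t) node \<times> ('p,'t) node) set \<Rightarrow> 'p set \<Rightarrow> 'p set \<Rightarrow> bool" where
  "sub_sound P T F Inp Out \<longleftrightarrow>
     (\<forall>k k' m'. k' \<le> k \<longrightarrow> set_mset m' \<subseteq> P \<longrightarrow>
        reach T F (repeat_mset k (mset_set Inp)) (m' + repeat_mset k' (mset_set Out)) \<longrightarrow>
        reach T F m' (repeat_mset (k - k') (mset_set Out)))"

end

theory Submission
  imports Defs
begin

(* Idea: in an AND net every place has at most one producing and at most one
   consuming transition, and the net is acyclic.  A run from k.I is therefore
   described by its firing-count vector x :: 't => nat, and the marking is
   determined by x: on place p it equals what was produced on p (k for an input
   place, otherwise the count of its producer) minus what was consumed (the count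
   of its consumer).  This invariant is written "explains k x m".

   From the invariant: every count is at most k (induction along the acyclic
   flow relation), and while some count is below k, an F-minimal transition
   with count below k is enabled.  Firing such transitions strictly decreases
   the measure sum (k - x t), so every marking reachable from k.I can be driven
   to k.O.  Finally, tokens on output places are never consumed, so a run
   from m' + k'.O to k.O is a run from m' to (k - k').O carrying k'.O along. *)

lemma sum_increment:
  fixes x :: "'a \<Rightarrow> nat"
  assumes "finite A"
  shows "(\<Sum>s\<in>A. (x(t := Suc (x t))) s) = (\<Sum>s\<in>A. x s) + (if t \<in> A then 1 else 0)"
proof -
  have "(x(t := Suc (x t))) s = x s + (if s = t then 1 else 0)" for s by simp
  then show ?thesis using assms by (simp add: sum.distrib)
qed

lemma pre_t_consumes: "0 < count (pre_t F t) p \<Longrightarrow> (Inl p, Inr t) \<in> F"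
  by (simp add: pre_t_def count_mset_set' split: if_splits)

lemma reach_inert_tokens:
  assumes "reach T F (m + A) M"
    and inert: "\<And>p t. p \<in># A \<Longrightarrow> (Inl p, Inr t) \<notin> F"
  shows "\<exists>M'. M = M' + A \<and> reach T F m M'"
  using assms(1) unfolding reach_def
proof (induction rule: rtranclp_induct)
  case base
  then show ?case by auto
next
  case (step M1 M2)
  then obtain M' where M1: "M1 = M' + A" and run: "(fire_step T F)\<^sup>*\<^sup>* m M'" by blast
  obtain t where t: "t \<in> T" and en: "pre_t F t \<subseteq># M1"
    and M2: "M2 = M1 - pre_t F t + post_t F t"
    using step.hyps(2) unfolding fire_step_def by blast
  have en': "pre_t F t \<subseteq># M'"
    unfolding subseteq_mset_def
  proof
    fix p
    have "count (pre_t F t) p \<le> count M' p + count A p"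
      using en M1 by (simp add: subseteq_mset_def)
    moreover have "count A p = 0" if "0 < count (pre_t F t) p"
      using inert pre_t_consumes[OF that] by (meson count_eq_zero_iff)
    ultimately show "count (pre_t F t) p \<le> count M' p" by fastforce
  qed
  have "M2 = (M' - pre_t F t + post_t F t) + A"
  proof (rule multiset_eqI)
    fix p
    have "count (pre_t F t) p \<le> count M' p" using en' by (simp add: subseteq_mset_def)
    then show "count M2 p = count (M' - pre_t F t + post_t F t + A) p" using M1 M2 by simp
  qed
  moreover have "(fire_step T F)\<^sup>*\<^sup>* m (M' - pre_t F t + post_t F t)"
  proof (rule rtranclp.rtrancl_into_rtrancl[OF run])
    show "fire_step T F M' (M' - pre_t F t + post_t F t)"
      using t en' unfolding fire_step_def by blast
  qed
  ultimately show ?case by blast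
qed

locale pAND =
  fixes P :: "'p set" and T :: "'t set" and F :: "(('p,'t) node \<times> ('p,'t) node) set"
    and Inp :: "'p set" and Out :: "'p set"
  assumes pAND_net: "pAND_net P T F Inp Out"
begin

lemma finite_P: "finite P" and finite_T: "finite T"
  and F_bipartite: "F \<subseteq> (Inl ` P \<times> Inr ` T) \<union> (Inr ` T \<times> Inl ` P)"
  and Inp_sub: "Inp \<subseteq> P" and Out_sub: "Out \<subseteq> P"
  and acyclic_F: "acyclic F"
  and degrees: "\<forall>p\<in>P.
      ((p \<in> Inp \<and> card (preset F (Inl p)) = 0) \<or> (p \<notin> Inp \<and> card (preset F (Inl p)) = 1)) \<and>
      ((p \<in> Out \<and> card (postset F (Inl p)) = 0) \<or> (p \<notin> Out \<and> card (postset F (Inl p)) = 1))"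
  and connected_from_Inp: "\<forall>x\<in>nodes P T. \<exists>i\<in>Inp. (Inl i, x) \<in> F\<^sup>*"
  using pAND_net unfolding pAND_net_def pWF_net_def petri_net_def AND_conditions_def by auto

lemma wf_F: "wf F"
proof (rule finite_acyclic_wf[OF _ acyclic_F])
  show "finite F" by (rule finite_subset[OF F_bipartite]) (simp add: finite_P finite_T)
qed

lemma arc_place_transition: "(Inl p, Inr t) \<in> F \<Longrightarrow> p \<in> P \<and> t \<in> T"
  and arc_transition_place: "(Inr t, Inl p) \<in> F \<Longrightarrow> p \<in> P \<and> t \<in> T"
  and no_arc_place_place: "(Inl p, Inl q) \<notin> F"
  and no_arc_transition_transition: "(Inr t, Inr u) \<notin> F"
  using F_bipartite by auto

definition producers :: "'p \<Rightarrow> 't set" where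
  "producers p = {t. (Inr t, Inl p) \<in> F}"

definition consumers :: "'p \<Rightarrow> 't set" where
  "consumers p = {t. (Inl p, Inr t) \<in> F}"

lemma finite_producers: "finite (producers p)"
  and finite_consumers: "finite (consumers p)"
  unfolding producers_def consumers_def
  by (auto intro: finite_subset[OF _ finite_T] dest: arc_place_transition arc_transition_place)

lemma preset_place: "preset F (Inl p) = Inr ` producers p"
proof -
  have "y \<in> range Inr" if "(y, Inl p) \<in> F" for y
    using that by (cases y) (auto simp: no_arc_place_place)
  then show ?thesis unfolding preset_def producers_def by blast
qed

lemma postset_place: "postset F (Inl p) = Inr ` consumers p"
proof -
  have "y \<in> range Inr" if "(Inl p, y) \<in> F" for y
    using that by (cases y) (auto simp: no_arc_place_place)
  then show ?thesis unfolding postset_def consumers_def by blast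
qed

lemma producers_Inp:
  assumes "p \<in> Inp" shows "producers p = {}"
proof -
  have "card (preset F (Inl p)) = 0" using degrees Inp_sub assms by blast
  then show ?thesis by (simp add: preset_place card_image finite_producers)
qed

lemma consumers_Out:
  assumes "p \<in> Out" shows "consumers p = {}"
proof -
  have "card (postset F (Inl p)) = 0" using degrees Out_sub assms by blast
  then show ?thesis by (simp add: postset_place card_image finite_consumers)
qed

lemma producers_unique:
  assumes "p \<in> P" "p \<notin> Inp" obtains t where "producers p = {t}"
  using assms degrees by (auto simp: preset_place card_image card_1_singleton_iff)

lemma consumers_unique:
  assumes "p \<in> P" "p \<notin> Out" obtains t where "consumers p = {t}"
  using assms degrees by (auto simp: postset_place card_image card_1_singleton_iff)

lemma producers_arc: "(Inr t, Inl p) \<in> F \<Longrightarrow> producers p = {t}"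
  using producers_unique arc_transition_place producers_Inp
  by (metis empty_iff mem_Collect_eq producers_def singletonD)

lemma consumers_arc: "(Inl p, Inr t) \<in> F \<Longrightarrow> consumers p = {t}"
  using consumers_unique arc_place_transition consumers_Out
  by (metis empty_iff mem_Collect_eq consumers_def singletonD)

lemma output_tokens_inert:
  assumes "p \<in># repeat_mset n (mset_set Out)" shows "(Inl p, Inr t) \<notin> F"
proof -
  have "p \<in> Out"
    using assms by (auto simp: count_mset_set' simp flip: count_greater_zero_iff split: if_splits)
  then show ?thesis using consumers_Out unfolding consumers_def by blast
qed

text \<open>Since every node is reachable from an input place, no transition has an
  empty preset.\<close>
lemma transition_has_pre_place:
  assumes "t \<in> T" obtains p where "(Inl p, Inr t) \<in> F"
proof -
  have "Inr t \<in> nodes P T" using assms unfolding nodes_def by auto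
  then obtain i where "(Inl i, Inr t) \<in> F\<^sup>*" using connected_from_Inp by blast
  then obtain y where "(y, Inr t) \<in> F" by (metis rtranclE sum.distinct(1))
  then show ?thesis using that by (cases y) (auto simp: no_arc_transition_transition)
qed

lemma count_pre_t: "count (pre_t F t) p = (if (Inl p, Inr t) \<in> F then 1 else 0)"
  and count_post_t: "count (post_t F t) p = (if (Inr t, Inl p) \<in> F then 1 else 0)"
  using finite_consumers[of p] finite_producers[of p]
  unfolding pre_t_def post_t_def consumers_def producers_def
  by (auto simp: count_mset_set' intro: finite_subset[OF _ finite_P]
           dest: arc_place_transition arc_transition_place)

section \<open>Firing-count vectors\<close>

text \<open>Tokens produced on p by a run starting in k.I with firing counts x, and
  tokens consumed from p.\<close>
definition produced :: "nat \<Rightarrow> ('t \<Rightarrow> nat) \<Rightarrow> 'p \<Rightarrow> nat" where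
  "produced k x p = (if p \<in> Inp then k else (\<Sum>t\<in>producers p. x t))"

definition consumed :: "('t \<Rightarrow> nat) \<Rightarrow> 'p \<Rightarrow> nat" where
  "consumed x p = (\<Sum>t\<in>consumers p. x t)"

definition explains :: "nat \<Rightarrow> ('t \<Rightarrow> nat) \<Rightarrow> 'p multiset \<Rightarrow> bool" where
  "explains k x m \<longleftrightarrow>
     (\<forall>p. if p \<in> P then count m p + consumed x p = produced k x p else count m p = 0)"

lemma produced_arc: "(Inr t, Inl p) \<in> F \<Longrightarrow> produced k x p = x t"
  using producers_arc producers_Inp unfolding produced_def by force

lemma consumed_arc: "(Inl p, Inr t) \<in> F \<Longrightarrow> consumed x p = x t"
  using consumers_arc unfolding consumed_def by simp

lemma explains_initial: "explains k (\<lambda>_. 0) (repeat_mset k (mset_set Inp))"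
  using Inp_sub finite_subset[OF Inp_sub finite_P]
  unfolding explains_def produced_def consumed_def by (auto simp: count_mset_set')

lemma explains_fire:
  assumes ex: "explains k x m" and enabled: "pre_t F t \<subseteq># m"
  shows "explains k (x(t := Suc (x t))) (m - pre_t F t + post_t F t)"
  unfolding explains_def
proof
  fix p
  define taken where "taken = (if (Inl p, Inr t) \<in> F then 1 else (0::nat))"
  define put where "put = (if (Inr t, Inl p) \<in> F then 1 else (0::nat))"
  have "taken \<le> count m p"
    using enabled count_pre_t[of t p] unfolding taken_def by (metis (full_types) subseteq_mset_def)
  moreover have "count (m - pre_t F t + post_t F t) p = count m p - taken + put"
    by (simp add: count_pre_t count_post_t taken_def put_def)
  moreover have "consumed (x(t := Suc (x t))) p = consumed x p + taken"
    using sum_increment[OF finite_consumers]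
    unfolding consumed_def taken_def consumers_def by simp
  moreover have "produced k (x(t := Suc (x t))) p = produced k x p + put"
    using sum_increment[OF finite_producers] producers_Inp
    unfolding produced_def put_def producers_def by auto
  moreover have "p \<notin> P \<Longrightarrow> taken = 0 \<and> put = 0"
    unfolding taken_def put_def by (auto dest: arc_place_transition arc_transition_place)
  ultimately show "if p \<in> P
      then count (m - pre_t F t + post_t F t) p + consumed (x(t := Suc (x t))) p
           = produced k (x(t := Suc (x t))) p
      else count (m - pre_t F t + post_t F t) p = 0"
    using ex[unfolded explains_def, rule_format, of p] by (simp split: if_splits)
qed

lemma explains_reachable:
  assumes "reach T F (repeat_mset k (mset_set Inp)) m" obtains x where "explains k x m"
  using assms unfolding reach_def
proof (induction arbitrary: thesis rule: rtranclp_induct)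
  case base
  then show ?case using explains_initial by blast
next
  case (step m1 m2)
  then obtain x where "explains k x m1" by blast
  moreover obtain t where "pre_t F t \<subseteq># m1" "m2 = m1 - pre_t F t + post_t F t"
    using step.hyps(2) unfolding fire_step_def by blast
  ultimately show ?case using explains_fire step.prems by blast
qed

text \<open>No transition can fire more than k times: following the acyclic flow
  relation back to the input places, each count is bounded by the count of the
  producer of one of its pre-places, or by k.\<close>
lemma count_bounded:
  assumes ex: "explains k x m" and "t \<in> T" shows "x t \<le> k"
proof -
  have "\<forall>t. n = Inr t \<longrightarrow> t \<in> T \<longrightarrow> x t \<le> k" for n :: "('p, 't) node"
    using wf_trancl[OF wf_F]
  proof (induction n rule: wf_induct_rule)
    case (less n)
    show ?case
    proof (intro allI impI)
      fix t assume n: "n = Inr t" and "t \<in> T"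
      then obtain p where pt: "(Inl p, Inr t) \<in> F" using transition_has_pre_place by blast
      have "p \<in> P" using arc_place_transition[OF pt] by simp
      then have balance: "count m p + x t = produced k x p"
        using ex consumed_arc[OF pt] unfolding explains_def by metis
      have "produced k x p \<le> k"
      proof (cases "p \<in> Inp")
        case True
        then show ?thesis unfolding produced_def by simp
      next
        case False
        then obtain u where "producers p = {u}" using producers_unique \<open>p \<in> P\<close> by blast
        then have up: "(Inr u, Inl p) \<in> F" unfolding producers_def by auto
        then have "(Inr u, n) \<in> F\<^sup>+" using pt n by auto
        then have "x u \<le> k" using less arc_transition_place[OF up] by blast
        then show ?thesis using produced_arc[OF up] by simp
      qed
      then show "x t \<le> k" using balance by linarith
    qed
  qed
  then show ?thesis using assms(2) by blast
qed

text \<open>Progress: if some transition has fired fewer than k times, then an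
  F-minimal such transition is enabled, since each of its pre-places has received
  a token that it has not yet consumed.\<close>
lemma progress:
  assumes ex: "explains k x m" and "t0 \<in> T" "x t0 < k"
  obtains t where "t \<in> T" "x t < k" "pre_t F t \<subseteq># m"
proof -
  let ?Q = "{Inr t | t. t \<in> T \<and> x t < k}"
  have "Inr t0 \<in> ?Q" using assms by blast
  from wfE_min[OF wf_trancl[OF wf_F] this] obtain z where "z \<in> ?Q"
    and minimal: "\<And>y. (y, z) \<in> F\<^sup>+ \<Longrightarrow> y \<notin> ?Q" by blast
  then obtain t where z: "z = Inr t" and t: "t \<in> T" "x t < k" by blast
  have "pre_t F t \<subseteq># m"
    unfolding subseteq_mset_def
  proof
    fix p
    show "count (pre_t F t) p \<le> count m p"
    proof (cases "(Inl p, Inr t) \<in> F")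
      case False
      then show ?thesis by (simp add: count_pre_t)
    next
      case pt: True
      have "p \<in> P" using arc_place_transition[OF pt] by simp
      then have balance: "count m p + x t = produced k x p"
        using ex consumed_arc[OF pt] unfolding explains_def by metis
      have "x t < produced k x p"
      proof (cases "p \<in> Inp")
        case True
        then show ?thesis using t unfolding produced_def by simp
      next
        case False
        then obtain u where "producers p = {u}" using producers_unique \<open>p \<in> P\<close> by blast
        then have up: "(Inr u, Inl p) \<in> F" unfolding producers_def by auto
        then have "(Inr u, z) \<in> F\<^sup>+" using pt z by auto
        then have "k \<le> x u" using minimal arc_transition_place[OF up] by force
        then show ?thesis using t produced_arc[OF up] by simp
      qed
      then have "1 \<le> count m p" using balance by linarith
      then show ?thesis using pt by (simp add: count_pre_t)
    qed
  qed
  then show ?thesis using that t by blast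
qed

lemma explains_final:
  assumes ex: "explains k x m" and all: "\<forall>t\<in>T. x t = k"
  shows "m = repeat_mset k (mset_set Out)"
proof (rule multiset_eqI)
  fix p
  show "count m p = count (repeat_mset k (mset_set Out)) p"
  proof (cases "p \<in> P")
    case False
    then show ?thesis using ex Out_sub unfolding explains_def by (auto simp: count_mset_set')
  next
    case True
    have "produced k x p = k"
    proof (cases "p \<in> Inp")
      case False
      then obtain u where "producers p = {u}" using producers_unique True by blast
      then show ?thesis using False all arc_transition_place
        unfolding produced_def producers_def by auto
    qed (simp add: produced_def)
    moreover have "consumed x p = (if p \<in> Out then 0 else k)"
    proof (cases "p \<in> Out")
      case False
      then obtain u where "consumers p = {u}" using consumers_unique True by blast
      then show ?thesis using False all arc_place_transition
        unfolding consumed_def consumers_def by auto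
    qed (simp add: consumed_def consumers_Out)
    moreover have "count m p + consumed x p = produced k x p"
      using ex True unfolding explains_def by auto
    ultimately show ?thesis
      using finite_subset[OF Out_sub finite_P] by (auto simp: count_mset_set')
  qed
qed

lemma explains_completes:
  assumes "explains k x m" shows "reach T F m (repeat_mset k (mset_set Out))"
  using assms
proof (induction "\<Sum>t\<in>T. k - x t" arbitrary: x m rule: less_induct)
  case less
  show ?case
  proof (cases "\<forall>t\<in>T. x t = k")
    case True
    then show ?thesis using explains_final[OF less.prems] unfolding reach_def by simp
  next
    case False
    then obtain t0 where "t0 \<in> T" "x t0 < k"
      using count_bounded[OF less.prems] le_neq_implies_less by blast
    then obtain t where t: "t \<in> T" "x t < k" and enabled: "pre_t F t \<subseteq># m"
      using progress[OF less.prems] by blast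
    define x' where "x' = x(t := Suc (x t))"
    define m' where "m' = m - pre_t F t + post_t F t"
    have "(\<Sum>s\<in>T. k - x' s) = (\<Sum>s\<in>T. k - x s) - 1"
    proof -
      have "(\<Sum>s\<in>T. k - x' s) = (k - x' t) + (\<Sum>s\<in>T-{t}. k - x s)"
        using t finite_T by (simp add: sum.remove x'_def)
      also have "\<dots> + 1 = (\<Sum>s\<in>T. k - x s)"
        using t finite_T by (simp add: sum.remove x'_def)
      finally show ?thesis by simp
    qed
    moreover have "0 < (\<Sum>s\<in>T. k - x s)"
      using t finite_T by (meson sum_pos2 zero_less_diff zero_le)
    moreover have "explains k x' m'"
      unfolding x'_def m'_def by (rule explains_fire[OF less.prems enabled])
    ultimately have "(\<Sum>s\<in>T. k - x' s) < (\<Sum>s\<in>T. k - x s)" and "explains k x' m'"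
      by linarith+
    then have "reach T F m' (repeat_mset k (mset_set Out))" by (rule less.hyps)
    moreover have "fire_step T F m m'" unfolding fire_step_def m'_def using t enabled by blast
    ultimately show ?thesis unfolding reach_def by (meson converse_rtranclp_into_rtranclp)
  qed
qed

end

theorem mainTheorem18:
  assumes "pAND_net P T F Inp Out"
  shows "sub_sound P T F Inp Out"
proof -
  interpret pAND P T F Inp Out using assms by unfold_locales
  let ?O = "mset_set Out"
  show ?thesis unfolding sub_sound_def
  proof (intro allI impI)
    fix k k' :: nat and m' :: "'a multiset"
    assume "k' \<le> k" and run: "reach T F (repeat_mset k (mset_set Inp)) (m' + repeat_mset k' ?O)"
    obtain x where "explains k x (m' + repeat_mset k' ?O)"
      using explains_reachable[OF run] .
    then have "reach T F (m' + repeat_mset k' ?O) (repeat_mset k ?O)"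
      by (rule explains_completes)
    then obtain M where M: "repeat_mset k ?O = M + repeat_mset k' ?O" and "reach T F m' M"
      using reach_inert_tokens output_tokens_inert by blast
    moreover have "M = repeat_mset (k - k') ?O"
      using M \<open>k' \<le> k\<close> by (metis add_right_cancel le_add_diff_inverse2 repeat_mset_distrib)
    ultimately show "reach T F m' (repeat_mset (k - k') ?O)" by simp
  qed
qed

end
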